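(* Let $S$ and $R$ be local rings with finite ideals $I_S\subset S$, $I_R\subset R$ such that $S/I_S\cong R/I_R\cong\mathbb Z_p$, and let $S\twoheadrightarrow R$ be a surjection with finite nonzero kernel $J$. Let $\tilde\Phi\subset\mathrm{GL}_2(\mathbb Z_p)$ be a finite subgroup of order prime to $p$ and let $\tilde\Gamma\subset\mathrm{GL}_2(R)$ be its inverse image under $\mathrm{GL}_2(R)\to\mathrm{GL}_2(\mathbb Z_p)$ (so $1\to 1+M_2(I_R)\to\tilde\Gamma\to\tilde\Phi\to1$). If $\Gamma_J\subset[\Gamma_S,\Gamma_S]\Gamma_S^p$, then there is no lift $\tilde\Gamma\to\mathrm{GL}_2(S)$.
   Context: For an ideal $I\subset S$, $\Gamma_I=1+M_2(I)$ and $\Gamma_S=1+M_2(I_S)$. A lift $\tilde\Gamma\to\mathrm{GL}_2(S)$ means a group homomorphism whose composition with $\mathrm{GL}_2(S)\to\mathrm{GL}_2(R)$ is the inclusion $\tilde\Gamma\subset\mathrm{GL}_2(R)$. *)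

theory Defs
  imports "HOL-Algebra.Algebra"
begin

definition Zp :: "nat \<Rightarrow> (nat \<Rightarrow> int) ring" where
  "Zp p = \<lparr> carrier = {x. \<forall>n. 0 \<le> x n \<and> x n < int p ^ n \<and> x (Suc n) mod (int p ^ n) = x n},
            Group.monoid.mult = (\<lambda>x y n. (x n * y n) mod (int p ^ n)),
            Group.monoid.one = (\<lambda>n. 1 mod (int p ^ n)),
            Ring.ring.zero = (\<lambda>n. 0),
            Ring.ring.add = (\<lambda>x y n. (x n + y n) mod (int p ^ n)) \<rparr>"

definition local_ring :: "('a, 'b) ring_scheme \<Rightarrow> bool" where
  "local_ring R \<longleftrightarrow> cring R \<and> (\<exists>!m. maximalideal m R)"

type_synonym 'a mat2 = "'a \<times> 'a \<times> 'a \<times> 'a"  \<comment> \<open>(a,b,c,d) = [[a,b],[c,d]]\<close>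

fun m2mult :: "('a, 'b) ring_scheme \<Rightarrow> 'a mat2 \<Rightarrow> 'a mat2 \<Rightarrow> 'a mat2" where
  "m2mult R (a, b, c, d) (e, f, g, h) =
     (a \<otimes>\<^bsub>R\<^esub> e \<oplus>\<^bsub>R\<^esub> b \<otimes>\<^bsub>R\<^esub> g, a \<otimes>\<^bsub>R\<^esub> f \<oplus>\<^bsub>R\<^esub> b \<otimes>\<^bsub>R\<^esub> h,
      c \<otimes>\<^bsub>R\<^esub> e \<oplus>\<^bsub>R\<^esub> d \<otimes>\<^bsub>R\<^esub> g, c \<otimes>\<^bsub>R\<^esub> f \<oplus>\<^bsub>R\<^esub> d \<otimes>\<^bsub>R\<^esub> h)"

fun m2det :: "('a, 'b) ring_scheme \<Rightarrow> 'a mat2 \<Rightarrow> 'a" where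
  "m2det R (a, b, c, d) = a \<otimes>\<^bsub>R\<^esub> d \<ominus>\<^bsub>R\<^esub> b \<otimes>\<^bsub>R\<^esub> c"

fun m2map :: "('a \<Rightarrow> 'c) \<Rightarrow> 'a mat2 \<Rightarrow> 'c mat2" where
  "m2map g (a, b, c, d) = (g a, g b, g c, g d)"

definition GL2 :: "('a, 'b) ring_scheme \<Rightarrow> 'a mat2 monoid" where
  "GL2 R = \<lparr> carrier = {(a, b, c, d). a \<in> carrier R \<and> b \<in> carrier R \<and> c \<in> carrier R \<and> d \<in> carrier R
                          \<and> m2det R (a, b, c, d) \<in> Units R},
             Group.monoid.mult = m2mult R,
             Group.monoid.one = (\<one>\<^bsub>R\<^esub>, \<zero>\<^bsub>R\<^esub>, \<zero>\<^bsub>R\<^esub>, \<one>\<^bsub>R\<^esub>) \<rparr>"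

definition congr_sub :: "('a, 'b) ring_scheme \<Rightarrow> 'a set \<Rightarrow> 'a mat2 set" where
  "congr_sub R I = {(\<one>\<^bsub>R\<^esub> \<oplus>\<^bsub>R\<^esub> a, b, c, \<one>\<^bsub>R\<^esub> \<oplus>\<^bsub>R\<^esub> d) | a b c d. a \<in> I \<and> b \<in> I \<and> c \<in> I \<and> d \<in> I}"

definition comm_pow_sub :: "('a, 'b) monoid_scheme \<Rightarrow> 'a set \<Rightarrow> nat \<Rightarrow> 'a set" where
  "comm_pow_sub G H p = generate G (derived_set G H \<union> {h [^]\<^bsub>G\<^esub> p | h. h \<in> H})"

end

theory Submission
  imports Defs
begin

text \<open>
  Suppose a lift \<open>h\<close> existed. The finite ideal \<open>I\<^sub>S\<close> is mapped into \<open>I\<^sub>R\<close> because \<open>\<int>\<^sub>p\<close> is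
  torsion free, so \<open>f\<close> maps \<open>\<Gamma>\<^sub>S\<close> into \<open>\<Gamma>\<^sub>R\<close>, which lies in the domain of \<open>h\<close>, and
  \<open>\<pi> = h \<circ> f\<close> is a homomorphism \<open>\<Gamma>\<^sub>S \<rightarrow> GL\<^sub>2(S)\<close> with \<open>\<pi>(g) \<equiv> g\<close> modulo \<open>J\<close>. Pick an ideal \<open>M\<close> maximal among the ideals
  properly contained in \<open>J\<close>; as \<open>S\<close> is local, Nakayama's argument gives \<open>m\<^sub>S J \<subseteq> M\<close>.
  Then \<open>g \<mapsto> (g - \<pi>(g))\<^sub>1\<^sub>1 mod M\<close> is a homomorphism from \<open>\<Gamma>\<^sub>S\<close> to the additive group of
  \<open>S/M\<close> whose values are killed by \<open>p \<in> m\<^sub>S\<close>, so it vanishes on \<open>[\<Gamma>\<^sub>S,\<Gamma>\<^sub>S]\<Gamma>\<^sub>S\<^sup>p \<supseteq> \<Gamma>\<^sub>J\<close>.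
  On \<open>diag(1 + j, 1) \<in> \<Gamma>\<^sub>J\<close>, where \<open>\<pi>\<close> is trivial, its value is \<open>j\<close>; hence \<open>J \<subseteq> M\<close>,
  a contradiction.
\<close>

lemma (in group) comm_pow_sub_subset_kernel:
  assumes H: "subgroup H G" and A: "comm_group A"
    and \<phi>: "\<phi> \<in> hom (G\<lparr>carrier := H\<rparr>) A"
    and pow: "\<And>h. h \<in> H \<Longrightarrow> \<phi> h [^]\<^bsub>A\<^esub> p = \<one>\<^bsub>A\<^esub>"
  shows "comm_pow_sub G H p \<subseteq> kernel (G\<lparr>carrier := H\<rparr>) A \<phi>"
proof -
  interpret A: comm_group A by (rule A)
  interpret \<phi>: group_hom "G\<lparr>carrier := H\<rparr>" A \<phi>
    using \<phi> subgroup.subgroup_is_group[OF H is_group] A.is_group by (simp add: group_hom_def group_hom_axioms_def)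
  let ?K = "kernel (G\<lparr>carrier := H\<rparr>) A \<phi>"
  have mult: "\<phi> (x \<otimes> y) = \<phi> x \<otimes>\<^bsub>A\<^esub> \<phi> y" if "x \<in> H" "y \<in> H" for x y
    using \<phi>.hom_mult[of x y] that by simp
  have KH: "?K \<subseteq> H" by (auto simp: kernel_def)
  have "subgroup ?K G"
  proof (rule group_incl_imp_subgroup)
    show "?K \<subseteq> carrier G" using KH subgroup.subset[OF H] by blast
    show "group (G\<lparr>carrier := ?K\<rparr>)"
      using subgroup.subgroup_is_group[OF \<phi>.subgroup_kernel \<phi>.G.is_group] by simp
  qed
  moreover have "derived_set G H \<subseteq> ?K"
  proof clarify
    fix a b assume ab: "a \<in> H" "b \<in> H"
    have inv: "\<phi> (inv a) = inv\<^bsub>A\<^esub> \<phi> a" "\<phi> (inv b) = inv\<^bsub>A\<^esub> \<phi> b"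
      using \<phi>.hom_inv[of a] \<phi>.hom_inv[of b] m_inv_consistent[OF H] ab by simp_all
    have c: "\<phi> a \<in> carrier A" "\<phi> b \<in> carrier A" using ab by (simp_all add: \<phi>.hom_closed)
    have "\<phi> (a \<otimes> b \<otimes> inv a \<otimes> inv b) = \<phi> a \<otimes>\<^bsub>A\<^esub> \<phi> b \<otimes>\<^bsub>A\<^esub> inv\<^bsub>A\<^esub> (\<phi> b \<otimes>\<^bsub>A\<^esub> \<phi> a)"
      using ab subgroup.m_inv_closed[OF H] subgroup.m_closed[OF H] inv c
      by (simp add: mult A.inv_mult A.m_assoc A.m_comm[OF A.inv_closed[OF c(1)] A.inv_closed[OF c(2)]])
    also have "\<dots> = \<one>\<^bsub>A\<^esub>" using c by (simp add: A.m_comm A.r_inv)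
    finally show "a \<otimes> b \<otimes> inv a \<otimes> inv b \<in> ?K"
      using ab subgroup.m_inv_closed[OF H] subgroup.m_closed[OF H] by (simp add: kernel_def)
  qed
  moreover have "{h [^] p | h. h \<in> H} \<subseteq> ?K"
  proof clarify
    fix h assume h: "h \<in> H"
    have "h [^] p = h [^]\<^bsub>G\<lparr>carrier := H\<rparr>\<^esub> p" by (rule nat_pow_consistent)
    then show "h [^] p \<in> ?K"
      using \<phi>.G.nat_pow_closed[of h p] \<phi>.hom_nat_pow[of h p] pow[OF h] h by (simp add: kernel_def)
  qed
  ultimately show ?thesis
    unfolding comm_pow_sub_def by (intro generate_subgroup_incl) auto
qed

lemma hom_comp_restrict:
  assumes k: "k \<in> hom A B" and h: "h \<in> hom (B\<lparr>carrier := G\<rparr>) C"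
    and H: "H \<subseteq> carrier A" "k ` H \<subseteq> G"
  shows "h \<circ> k \<in> hom (A\<lparr>carrier := H\<rparr>) C"
proof (rule homI)
  fix x assume "x \<in> carrier (A\<lparr>carrier := H\<rparr>)"
  then show "(h \<circ> k) x \<in> carrier C" using H hom_in_carrier[OF h] by auto
next
  fix x y assume "x \<in> carrier (A\<lparr>carrier := H\<rparr>)" "y \<in> carrier (A\<lparr>carrier := H\<rparr>)"
  then have "x \<in> carrier A" "y \<in> carrier A" "k x \<in> G" "k y \<in> G" using H by auto
  then show "(h \<circ> k) (x \<otimes>\<^bsub>A\<lparr>carrier := H\<rparr>\<^esub> y) = (h \<circ> k) x \<otimes>\<^bsub>C\<^esub> (h \<circ> k) y"
    using hom_mult[OF k] hom_mult[OF h, of "k x" "k y"] by simp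
qed

lemma (in ring_hom_ring) hom_add_pow:
  "x \<in> carrier R \<Longrightarrow> h (add_pow R (n::nat) x) = add_pow S n (h x)"
  using group_hom.hom_nat_pow[OF a_group_hom] by (simp add: add_pow_def)

lemma (in ring_hom_ring) minus_mem_a_kernel:
  assumes "x \<in> carrier R" "y \<in> carrier R" "h x = h y"
  shows "x \<ominus> y \<in> a_kernel R S h"
proof -
  have "h (x \<ominus> y) = h y \<ominus>\<^bsub>S\<^esub> h y"
    using assms by (simp add: a_minus_def)
  also have "\<dots> = \<zero>\<^bsub>S\<^esub>" using assms(2) by (simp add: a_minus_def S.r_neg)
  finally show ?thesis using assms(1,2) unfolding a_kernel_def' by simp
qed

lemma (in ring) finite_ideal_add_pow_card:
  assumes "ideal I R" "finite I" "y \<in> I"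
  shows "add_pow R (card I) y = \<zero>"
proof -
  have "subgroup I (add_monoid R)"
    using assms(1) by (simp add: ideal_def additive_subgroup.a_subgroup)
  then interpret I: group "(add_monoid R)\<lparr>carrier := I\<rparr>"
    using subgroup.subgroup_is_group a_group by blast
  have "y [^]\<^bsub>(add_monoid R)\<lparr>carrier := I\<rparr>\<^esub> order ((add_monoid R)\<lparr>carrier := I\<rparr>) = \<zero>"
    using I.pow_order_eq_1[of y] assms(3) by simp
  then show ?thesis by (simp add: add_pow_def order_def nat_pow_def)
qed

section \<open>Local rings\<close>

lemma (in cring) exists_maximalideal_superset:
  assumes "ideal I R" "\<one> \<notin> I"
  obtains m where "maximalideal m R" "I \<subseteq> m"
proof -
  let ?A = "{K. ideal K R \<and> I \<subseteq> K \<and> \<one> \<notin> K}"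
  have "\<exists>m\<in>?A. \<forall>K\<in>?A. m \<subseteq> K \<longrightarrow> K = m"
  proof (rule subset_Zorn)
    fix C assume C: "subset.chain ?A C"
    show "\<exists>U\<in>?A. \<forall>K\<in>C. K \<subseteq> U"
    proof (cases "C = {}")
      case True
      then show ?thesis using assms by blast
    next
      case False
      have "subset.chain {K. ideal K R} C" using C by (auto simp: pred_on.chain_def)
      then have "ideal (\<Union>C) R" using chain_Union_is_ideal[of C] False by simp
      moreover have "I \<subseteq> \<Union>C" "\<one> \<notin> \<Union>C"
        using C False by (fastforce simp: pred_on.chain_def)+
      ultimately show ?thesis by blast
    qed
  qed
  then obtain m where m: "m \<in> ?A" and max: "\<forall>K\<in>?A. m \<subseteq> K \<longrightarrow> K = m" ..
  have "maximalideal m R"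
  proof (rule maximalidealI)
    show "ideal m R" "carrier R \<noteq> m" using m by auto
    fix K assume "ideal K R" "m \<subseteq> K" "K \<subseteq> carrier R"
    then show "K = m \<or> K = carrier R"
      using m max ideal.one_imp_carrier by blast
  qed
  then show thesis using that m by blast
qed

lemma (in cring) local_ring_ideal_subset:
  assumes "local_ring R" "maximalideal m R" "ideal I R" "\<one> \<notin> I"
  shows "I \<subseteq> m"
proof -
  obtain m' where "maximalideal m' R" "I \<subseteq> m'"
    using exists_maximalideal_superset[OF assms(3,4)] .
  then show ?thesis using assms(1,2) by (auto simp: local_ring_def)
qed

lemma (in cring) local_ring_Units:
  assumes "local_ring R" "maximalideal m R" "x \<in> carrier R" "x \<notin> m"
  shows "x \<in> Units R"
proof (rule ccontr)
  assume "x \<notin> Units R"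
  then have "\<one> \<notin> PIdl x"
    using assms(3) by (auto simp: cgenideal_def Units_def m_comm)
  then have "PIdl x \<subseteq> m"
    using local_ring_ideal_subset[OF assms(1,2)] cgenideal_ideal[OF assms(3)] by blast
  then show False using cgenideal_self[OF assms(3)] assms(4) by blast
qed

lemma (in cring) local_ring_Units_if_minus_one_mem:
  assumes loc: "local_ring R" "maximalideal m R"
    and x: "x \<in> carrier R" "x \<ominus> \<one> \<in> m"
  shows "x \<in> Units R"
proof (rule local_ring_Units[OF loc x(1)])
  have m: "ideal m R" using loc(2) by (rule maximalideal.axioms(1))
  show "x \<notin> m"
  proof
    assume "x \<in> m"
    then have "x \<ominus> (x \<ominus> \<one>) \<in> m"
      using m x(2) by (simp add: a_minus_def ideal.axioms(1) additive_subgroup.a_closed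
          additive_subgroup.a_inv_closed)
    moreover have "x \<ominus> (x \<ominus> \<one>) = \<one>" using x(1) by algebra
    ultimately show False
      using m maximalideal.I_notcarr[OF loc(2)] ideal.one_imp_carrier by fastforce
  qed
qed

lemma (in cring) local_ring_maximal_subideal_absorbs:
  assumes loc: "local_ring R" "maximalideal m R"
    and J: "ideal J R" and M: "ideal M R" "M \<subseteq> J"
    and max: "\<And>K. ideal K R \<Longrightarrow> M \<subseteq> K \<Longrightarrow> K \<subseteq> J \<Longrightarrow> K = M \<or> K = J"
    and a: "a \<in> m" and y: "y \<in> J"
  shows "a \<otimes> y \<in> M"
proof (rule ccontr)
  assume ay_notin: "a \<otimes> y \<notin> M"
  have m: "ideal m R" using loc(2) by (rule maximalideal.axioms(1))
  have ac: "a \<in> carrier R" using m a by (rule ideal.Icarr)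
  have yc: "y \<in> carrier R" using y J by (simp add: ideal.Icarr)
  have ay: "a \<otimes> y \<in> J" using J ac y by (simp add: ideal.I_l_closed)
  (* Nakayama: maximality forces M + (a y) = J, so y = u + s a y with u \<in> M and 1 - s a a unit. *)
  let ?K = "M <+>\<^bsub>R\<^esub> PIdl (a \<otimes> y)"
  have K_eq: "?K = Idl (M \<union> PIdl (a \<otimes> y))"
    using union_genideal[OF M(1) cgenideal_ideal] ac yc by simp
  have "M \<union> PIdl (a \<otimes> y) \<subseteq> ?K"
    unfolding K_eq using M(1) ac yc by (intro genideal_self) (auto simp: ideal.Icarr cgenideal_def)
  moreover have "?K \<subseteq> J"
    unfolding K_eq using M J ay by (intro genideal_minimal) (auto simp: cgenideal_minimal)
  moreover have "ideal ?K R" using add_ideals[OF M(1) cgenideal_ideal] ac yc by simp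
  ultimately have "?K = J"
    using max[of ?K] ay_notin cgenideal_self[of "a \<otimes> y"] ac yc by blast
  then obtain u s where us: "u \<in> M" "s \<in> carrier R" "y = u \<oplus> s \<otimes> (a \<otimes> y)"
    using y by (auto simp: set_add_def' cgenideal_def)
  have uc: "u \<in> carrier R" using us(1) M(1) by (simp add: ideal.Icarr)
  let ?t = "s \<otimes> (a \<otimes> y)"
  have "(\<one> \<ominus> s \<otimes> a) \<otimes> y = y \<ominus> ?t" using us(2) ac yc by algebra
  also have "\<dots> = (u \<oplus> ?t) \<ominus> ?t" using us(3) by (rule arg_cong)
  also have "\<dots> = u" using us(2) ac yc uc by algebra
  finally have w_y: "(\<one> \<ominus> s \<otimes> a) \<otimes> y = u" .
  have "(\<one> \<ominus> s \<otimes> a) \<ominus> \<one> = \<ominus> (s \<otimes> a)" using ac us(2) by algebra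
  then have w: "\<one> \<ominus> s \<otimes> a \<in> Units R"
    using m a us(2) ac
    by (intro local_ring_Units_if_minus_one_mem[OF loc])
      (simp_all add: ideal.I_l_closed ideal.axioms(1) additive_subgroup.a_inv_closed)
  have "y = inv (\<one> \<ominus> s \<otimes> a) \<otimes> ((\<one> \<ominus> s \<otimes> a) \<otimes> y)"
    using w yc by (simp add: m_assoc[symmetric] Units_l_inv Units_closed)
  then have "y \<in> M" using w_y ideal.I_l_closed[OF M(1) us(1) Units_inv_closed[OF w]] by simp
  then show False using ay_notin M(1) ac by (simp add: ideal.I_l_closed)
qed

lemma (in cring) local_ring_exists_absorbing_subideal:
  assumes loc: "local_ring R" "maximalideal m R"
    and J: "ideal J R" "finite J" "J \<noteq> {\<zero>}"
  obtains M where "ideal M R" "M \<subseteq> J" "M \<noteq> J" "\<And>a y. a \<in> m \<Longrightarrow> y \<in> J \<Longrightarrow> a \<otimes> y \<in> M"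
proof -
  let ?P = "{K. ideal K R \<and> K \<subseteq> J \<and> K \<noteq> J}"
  have "finite ?P" using J(2) by (rule finite_subset[rotated, OF finite_Pow_iff[THEN iffD2]]) auto
  moreover have "{\<zero>} \<in> ?P"
    using J zeroideal by (auto simp: ideal.axioms(1) additive_subgroup.zero_closed)
  then have "?P \<noteq> {}" by blast
  ultimately obtain M where M: "M \<in> ?P" and max: "\<forall>K\<in>?P. M \<subseteq> K \<longrightarrow> K = M"
    by (rule finite_has_maximal[THEN bexE]) auto
  show thesis
  proof (rule that)
    show "ideal M R" "M \<subseteq> J" "M \<noteq> J" using M by auto
    fix a y assume "a \<in> m" "y \<in> J"
    then show "a \<otimes> y \<in> M"
      using local_ring_maximal_subideal_absorbs[OF loc J(1) \<open>ideal M R\<close> \<open>M \<subseteq> J\<close>] max by blast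
  qed
qed

section \<open>Quotients isomorphic to the \<open>p\<close>-adic integers\<close>

lemma carrier_Zp:
  "carrier (Zp p) = {x. \<forall>n. 0 \<le> x n \<and> x n < int p ^ n \<and> x (Suc n) mod int p ^ n = x n}"
  by (simp add: Zp_def)

lemma Zp_add_pow: "add_pow (Zp p) (n::nat) z = (\<lambda>k. (int n * z k) mod int p ^ k)"
proof (induction n)
  case 0
  then show ?case by (simp add: add_pow_def Zp_def)
next
  case (Suc n)
  then show ?case
    by (simp add: add_pow_def Zp_def mod_add_left_eq mod_add_right_eq algebra_simps)
qed

lemma Zp_coherent:
  assumes "z \<in> carrier (Zp p)"
  shows "z (k + e) mod int p ^ k = z k"
proof (induction e)
  case 0
  then show ?case using assms by (simp add: carrier_Zp)
next
  case (Suc e)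
  have "z (k + Suc e) mod int p ^ k = z (Suc (k + e)) mod int p ^ (k + e) mod int p ^ k"
    by (simp add: mod_mod_cancel le_imp_power_dvd)
  then show ?case using Suc assms by (simp add: carrier_Zp)
qed

lemma Zp_add_pow_eq_zero:
  assumes p: "Factorial_Ring.prime p" and z: "z \<in> carrier (Zp p)"
    and n: "n > 0" "add_pow (Zp p) (n::nat) z = \<zero>\<^bsub>Zp p\<^esub>"
  shows "z = \<zero>\<^bsub>Zp p\<^esub>"
proof -
  obtain m where nm: "n = p ^ multiplicity p n * m" "\<not> p dvd m"
    using multiplicity_decompose'[of n p] n(1) prime_gt_1_nat[OF p] by auto
  define k where "k = multiplicity p n"
  have "z j = 0" for j
  proof -
    have "(int n * z (j + k)) mod int p ^ (j + k) = 0"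
      using fun_cong[OF n(2), of "j + k"] by (simp only: Zp_add_pow) (simp add: Zp_def)
    then have "int p ^ (k + j) dvd int n * z (j + k)" by (simp add: mod_eq_0_iff_dvd add.commute)
    also have "int n * z (j + k) = int p ^ k * (int m * z (j + k))"
      by (subst nm(1)) (simp add: k_def)
    finally have "int p ^ j dvd int m * z (j + k)"
      using prime_gt_0_nat[OF p] by (simp add: power_add)
    moreover have "coprime (int p ^ j) (int m)"
      using p nm(2) by (simp add: prime_imp_coprime)
    ultimately have "int p ^ j dvd z (j + k)" by (simp add: coprime_dvd_mult_right_iff)
    then show ?thesis using Zp_coherent[OF z, of j k] by simp
  qed
  then show ?thesis by (auto simp: Zp_def)
qed

lemma Zp_add_pow_ne_one:
  assumes "p > 1" shows "add_pow (Zp p) p z \<noteq> \<one>\<^bsub>Zp p\<^esub>"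
proof
  assume "add_pow (Zp p) p z = \<one>\<^bsub>Zp p\<^esub>"
  from fun_cong[OF this, of 1] have "(int p * z 1) mod int p = 1 mod int p"
    by (simp only: Zp_add_pow) (simp add: Zp_def)
  then show False using assms by simp
qed

lemma Zp_ring_if_iso:
  assumes "p > 0" "ring A" "\<phi> \<in> ring_iso A (Zp p)"
  shows "ring (Zp p)"
proof -
  (* The transported ring has zero \<open>\<phi> \<zero>\<close>; the zero sequence is idempotent in it, so equals it. *)
  let ?Z = "(Zp p)\<lparr>zero := \<phi> \<zero>\<^bsub>A\<^esub>\<rparr>"
  interpret Z: ring ?Z using ring.ring_iso_imp_img_ring[OF assms(2,3)] .
  let ?e = "\<lambda>n::nat. 0::int"
  have "?e \<in> carrier ?Z" "?e \<oplus>\<^bsub>?Z\<^esub> ?e = ?e" using assms(1) by (simp_all add: Zp_def)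
  then have "?e = \<zero>\<^bsub>?Z\<^esub>" by (metis Z.add.l_cancel Z.r_zero Z.zero_closed)
  then have "?Z = Zp p" by (simp add: Zp_def)
  then show ?thesis using Z.ring_axioms by simp
qed

locale quotient_Zp = ring +
  fixes I :: "'a set" and \<phi> :: "'a set \<Rightarrow> nat \<Rightarrow> int" and p :: nat
  assumes ideal_I: "ideal I R"
    and iso: "\<phi> \<in> ring_iso (R Quot I) (Zp p)"
    and prime_p: "Factorial_Ring.prime p"
begin

lemma Zp_is_ring: "ring (Zp p)"
  using Zp_ring_if_iso[OF prime_gt_0_nat[OF prime_p] ideal.quotient_is_ring[OF ideal_I] iso] .

lemma reduction_ring_hom: "ring_hom_ring R (Zp p) (\<lambda>x. \<phi> (I +> x))"
proof -
  have "\<phi> \<circ> (+>) I \<in> ring_hom R (Zp p)"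
    using ring_hom_trans[OF ideal.rcos_ring_hom[OF ideal_I]] iso by (auto simp: ring_iso_def)
  then show ?thesis
    using ring_hom_ringI2[OF ring_axioms Zp_is_ring] by (simp add: comp_def)
qed

interpretation red: ring_hom_ring R "Zp p" "\<lambda>x. \<phi> (I +> x)"
  by (rule reduction_ring_hom)

lemma reduction_eq_zero_iff:
  assumes "x \<in> carrier R"
  shows "\<phi> (I +> x) = \<zero>\<^bsub>Zp p\<^esub> \<longleftrightarrow> x \<in> I"
proof -
  have inj: "inj_on \<phi> (carrier (R Quot I))" using iso by (simp add: ring_iso_def bij_betw_def)
  have "\<phi> (I +> \<zero>) = \<zero>\<^bsub>Zp p\<^esub>" by simp
  moreover have "I +> \<zero> = I"
    using a_rcos_zero[OF ideal_I] ideal_I by (simp add: ideal.axioms(1) additive_subgroup.zero_closed)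
  moreover have "I +> x \<in> carrier (R Quot I)" "I \<in> carrier (R Quot I)"
    using assms ring.ring_simprules(2)[OF ideal.quotient_is_ring[OF ideal_I]]
    by (auto simp: FactRing_def A_RCOSETS_def')
  ultimately show ?thesis
    using inj_onD[OF inj] a_rcos_zero[OF ideal_I] ideal.rcos_const_imp_mem[OF ideal_I assms] by metis
qed

lemma one_notin_ideal: "\<one> \<notin> I"
proof -
  have "\<zero>\<^bsub>Zp p\<^esub> \<noteq> \<one>\<^bsub>Zp p\<^esub>"
    using Zp_add_pow_ne_one[OF prime_gt_1_nat[OF prime_p], of "\<zero>\<^bsub>Zp p\<^esub>"]
    by (simp only: Zp_add_pow) (simp add: Zp_def)
  then show ?thesis using reduction_eq_zero_iff[of \<one>] by simp
qed

lemma add_pow_char_notin_Units: "add_pow R p \<one> \<notin> Units R"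
proof
  assume "add_pow R p \<one> \<in> Units R"
  then obtain u where u: "u \<in> carrier R" "add_pow R p \<one> \<otimes> u = \<one>" by (auto simp: Units_def)
  then have "add_pow R p u = \<one>" by (simp add: add_pow_ldistr)
  then have "add_pow (Zp p) p (\<phi> (I +> u)) = \<one>\<^bsub>Zp p\<^esub>" using u(1) by (simp flip: red.hom_add_pow)
  then show False using Zp_add_pow_ne_one[OF prime_gt_1_nat[OF prime_p]] by blast
qed

lemma add_pow_mem_imp_mem:
  assumes "x \<in> carrier R" "n > 0" "add_pow R (n::nat) x \<in> I"
  shows "x \<in> I"
proof -
  have "add_pow (Zp p) n (\<phi> (I +> x)) = \<zero>\<^bsub>Zp p\<^esub>"
    using assms reduction_eq_zero_iff by (simp flip: red.hom_add_pow)
  then show ?thesis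
    using Zp_add_pow_eq_zero[OF prime_p red.hom_closed[OF assms(1)] assms(2)]
      reduction_eq_zero_iff[OF assms(1)] by simp
qed

end

section \<open>\<open>GL\<^sub>2\<close> and congruence subgroups\<close>

lemma GL2_carrier_iff:
  "(a, b, c, d) \<in> carrier (GL2 R) \<longleftrightarrow>
     a \<in> carrier R \<and> b \<in> carrier R \<and> c \<in> carrier R \<and> d \<in> carrier R \<and>
     a \<otimes>\<^bsub>R\<^esub> d \<ominus>\<^bsub>R\<^esub> b \<otimes>\<^bsub>R\<^esub> c \<in> Units R"
  by (simp add: GL2_def)

lemma GL2_mult [simp]: "M \<otimes>\<^bsub>GL2 R\<^esub> N = m2mult R M N"
  by (simp add: GL2_def)

lemma GL2_one [simp]: "\<one>\<^bsub>GL2 R\<^esub> = (\<one>\<^bsub>R\<^esub>, \<zero>\<^bsub>R\<^esub>, \<zero>\<^bsub>R\<^esub>, \<one>\<^bsub>R\<^esub>)"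
  by (simp add: GL2_def)

context cring
begin

lemma GL2_left_inverse:
  assumes M: "(a, b, c, d) \<in> carrier (GL2 R)"
  defines "v \<equiv> inv (a \<otimes> d \<ominus> b \<otimes> c)"
  shows "(v \<otimes> d, \<ominus> (v \<otimes> b), \<ominus> (v \<otimes> c), v \<otimes> a) \<in> carrier (GL2 R)"
    and "m2mult R (v \<otimes> d, \<ominus> (v \<otimes> b), \<ominus> (v \<otimes> c), v \<otimes> a) (a, b, c, d) = (\<one>, \<zero>, \<zero>, \<one>)"
proof -
  have abcd: "a \<in> carrier R" "b \<in> carrier R" "c \<in> carrier R" "d \<in> carrier R"
    and u: "a \<otimes> d \<ominus> b \<otimes> c \<in> Units R" using M by (auto simp: GL2_carrier_iff)
  have v: "v \<in> Units R" "v \<otimes> (a \<otimes> d \<ominus> b \<otimes> c) = \<one>" using u by (simp_all add: v_def)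
  then have vc: "v \<in> carrier R" by blast
  have "v \<otimes> d \<otimes> (v \<otimes> a) \<ominus> \<ominus> (v \<otimes> b) \<otimes> \<ominus> (v \<otimes> c) = v \<otimes> (v \<otimes> (a \<otimes> d \<ominus> b \<otimes> c))"
    using abcd vc by algebra
  then show "(v \<otimes> d, \<ominus> (v \<otimes> b), \<ominus> (v \<otimes> c), v \<otimes> a) \<in> carrier (GL2 R)"
    using abcd v vc by (simp add: GL2_carrier_iff)
  have "v \<otimes> d \<otimes> a \<oplus> \<ominus> (v \<otimes> b) \<otimes> c = v \<otimes> (a \<otimes> d \<ominus> b \<otimes> c)"
    "\<ominus> (v \<otimes> c) \<otimes> b \<oplus> v \<otimes> a \<otimes> d = v \<otimes> (a \<otimes> d \<ominus> b \<otimes> c)"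
    "v \<otimes> d \<otimes> b \<oplus> \<ominus> (v \<otimes> b) \<otimes> d = \<zero>" "\<ominus> (v \<otimes> c) \<otimes> a \<oplus> v \<otimes> a \<otimes> c = \<zero>"
    using abcd vc by algebra+
  then show "m2mult R (v \<otimes> d, \<ominus> (v \<otimes> b), \<ominus> (v \<otimes> c), v \<otimes> a) (a, b, c, d) = (\<one>, \<zero>, \<zero>, \<one>)"
    using v by simp
qed

lemma GL2_group: "group (GL2 R)"
proof (rule groupI)
  fix M N assume "M \<in> carrier (GL2 R)" "N \<in> carrier (GL2 R)"
  moreover obtain a b c d e f g h where "M = (a, b, c, d)" "N = (e, f, g, h)"
    by (cases M, cases N) auto
  moreover have "(a \<otimes> e \<oplus> b \<otimes> g) \<otimes> (c \<otimes> f \<oplus> d \<otimes> h) \<ominus> (a \<otimes> f \<oplus> b \<otimes> h) \<otimes> (c \<otimes> e \<oplus> d \<otimes> g)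
      = (a \<otimes> d \<ominus> b \<otimes> c) \<otimes> (e \<otimes> h \<ominus> f \<otimes> g)"
    if "a \<in> carrier R" "b \<in> carrier R" "c \<in> carrier R" "d \<in> carrier R"
       "e \<in> carrier R" "f \<in> carrier R" "g \<in> carrier R" "h \<in> carrier R"
    using that by algebra
  ultimately show "M \<otimes>\<^bsub>GL2 R\<^esub> N \<in> carrier (GL2 R)" by (auto simp: GL2_carrier_iff)
next
  fix M N L assume "M \<in> carrier (GL2 R)" "N \<in> carrier (GL2 R)" "L \<in> carrier (GL2 R)"
  then show "M \<otimes>\<^bsub>GL2 R\<^esub> N \<otimes>\<^bsub>GL2 R\<^esub> L = M \<otimes>\<^bsub>GL2 R\<^esub> (N \<otimes>\<^bsub>GL2 R\<^esub> L)"
    by (cases M, cases N, cases L) (simp add: GL2_carrier_iff, safe; algebra)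
next
  fix M assume "M \<in> carrier (GL2 R)"
  then show "\<one>\<^bsub>GL2 R\<^esub> \<otimes>\<^bsub>GL2 R\<^esub> M = M" by (cases M) (simp add: GL2_carrier_iff)
  obtain a b c d where M: "M = (a, b, c, d)" by (cases M)
  show "\<exists>N\<in>carrier (GL2 R). N \<otimes>\<^bsub>GL2 R\<^esub> M = \<one>\<^bsub>GL2 R\<^esub>"
    unfolding M GL2_mult GL2_one
    using GL2_left_inverse[OF \<open>M \<in> carrier (GL2 R)\<close>[unfolded M]] by blast
qed (simp add: GL2_carrier_iff a_minus_def)

end

lemma m2map_hom_GL2:
  assumes "ring R" "ring S" "f \<in> ring_hom R S"
  shows "m2map f \<in> hom (GL2 R) (GL2 S)"
proof -
  interpret f: ring_hom_ring R S f using ring_hom_ringI2 assms .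
  have Units: "f u \<in> Units S" if u: "u \<in> Units R" for u
  proof -
    obtain v where "u \<in> carrier R" "v \<in> carrier R" "v \<otimes>\<^bsub>R\<^esub> u = \<one>\<^bsub>R\<^esub>" "u \<otimes>\<^bsub>R\<^esub> v = \<one>\<^bsub>R\<^esub>"
      using u unfolding Units_def by auto
    then have "f v \<otimes>\<^bsub>S\<^esub> f u = \<one>\<^bsub>S\<^esub>" "f u \<otimes>\<^bsub>S\<^esub> f v = \<one>\<^bsub>S\<^esub>"
      by (simp_all flip: f.hom_mult)
    then show ?thesis
      using \<open>v \<in> carrier R\<close> u unfolding Units_def by (auto intro!: bexI[of _ "f v"])
  qed
  show ?thesis
  proof (rule homI)
    fix M assume "M \<in> carrier (GL2 R)"
    then show "m2map f M \<in> carrier (GL2 S)"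
      by (cases M) (auto simp: GL2_carrier_iff Units a_minus_def simp flip: f.hom_mult f.hom_a_inv f.hom_add)
  next
    fix M N assume "M \<in> carrier (GL2 R)" "N \<in> carrier (GL2 R)"
    then show "m2map f (M \<otimes>\<^bsub>GL2 R\<^esub> N) = m2map f M \<otimes>\<^bsub>GL2 S\<^esub> m2map f N"
      by (cases M, cases N) (simp add: GL2_carrier_iff)
  qed
qed

context cring
begin

lemma congr_sub_iff:
  assumes "ideal I R"
  shows "(a, b, c, d) \<in> congr_sub R I \<longleftrightarrow>
    a \<in> carrier R \<and> d \<in> carrier R \<and> a \<ominus> \<one> \<in> I \<and> b \<in> I \<and> c \<in> I \<and> d \<ominus> \<one> \<in> I"
proof
  assume "(a, b, c, d) \<in> congr_sub R I"
  then obtain a' d' where "a = \<one> \<oplus> a'" "d = \<one> \<oplus> d'" "a' \<in> I" "b \<in> I" "c \<in> I" "d' \<in> I"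
    by (auto simp: congr_sub_def)
  moreover have "a' \<in> carrier R" "d' \<in> carrier R" using calculation assms by (auto intro: ideal.Icarr)
  moreover have "(\<one> \<oplus> a') \<ominus> \<one> = a'" "(\<one> \<oplus> d') \<ominus> \<one> = d'" using calculation by algebra+
  ultimately show "a \<in> carrier R \<and> d \<in> carrier R \<and> a \<ominus> \<one> \<in> I \<and> b \<in> I \<and> c \<in> I \<and> d \<ominus> \<one> \<in> I"
    by simp
next
  assume h: "a \<in> carrier R \<and> d \<in> carrier R \<and> a \<ominus> \<one> \<in> I \<and> b \<in> I \<and> c \<in> I \<and> d \<ominus> \<one> \<in> I"
  have "a = \<one> \<oplus> (a \<ominus> \<one>)" "d = \<one> \<oplus> (d \<ominus> \<one>)" using h by algebra+
  then show "(a, b, c, d) \<in> congr_sub R I" using h unfolding congr_sub_def by blast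
qed

lemma congr_sub_Int_carrier_eq_kernel:
  assumes I: "ideal I R"
  shows "congr_sub R I \<inter> carrier (GL2 R) = kernel (GL2 R) (GL2 (R Quot I)) (m2map ((+>) I))"
proof -
  have coset_eq: "I +> x = I +> y \<longleftrightarrow> x \<ominus> y \<in> I" if "x \<in> carrier R" "y \<in> carrier R" for x y
    using quotient_eq_iff_same_a_r_cos[OF I that] by simp
  have coset_zero: "I +> x = I \<longleftrightarrow> x \<in> I" if "x \<in> carrier R" for x
    using coset_eq[OF that zero_closed] that a_rcos_zero[OF I, of \<zero>] I
    by (simp add: a_minus_def ideal.axioms(1) additive_subgroup.zero_closed)
  show ?thesis
  proof (intro Set.set_eqI)
    fix M :: "'a mat2"
    obtain a b c d where M: "M = (a, b, c, d)" by (cases M)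
    show "M \<in> congr_sub R I \<inter> carrier (GL2 R) \<longleftrightarrow> M \<in> kernel (GL2 R) (GL2 (R Quot I)) (m2map ((+>) I))"
    proof (cases "M \<in> carrier (GL2 R)")
      case True
      then have "a \<in> carrier R" "b \<in> carrier R" "c \<in> carrier R" "d \<in> carrier R"
        by (simp_all add: M GL2_carrier_iff)
      then show ?thesis
        using True by (simp add: M kernel_def congr_sub_iff[OF I] FactRing_def coset_eq coset_zero)
    qed (simp add: kernel_def)
  qed
qed

lemma congr_sub_subgroup:
  assumes loc: "local_ring R" "maximalideal m R" and I: "ideal I R" "I \<subseteq> m"
  shows "subgroup (congr_sub R I) (GL2 R)"
proof -
  have "congr_sub R I \<subseteq> carrier (GL2 R)"
  proof (clarify)
    fix a b c d assume "(a, b, c, d) \<in> congr_sub R I"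
    then have h: "a \<in> carrier R" "d \<in> carrier R" "a \<ominus> \<one> \<in> I" "b \<in> I" "c \<in> I" "d \<ominus> \<one> \<in> I"
      by (simp_all add: congr_sub_iff[OF I(1)])
    then have bc: "b \<in> carrier R" "c \<in> carrier R" using I(1) by (simp_all add: ideal.Icarr)
    have "a \<otimes> d \<ominus> b \<otimes> c \<ominus> \<one> = (a \<ominus> \<one>) \<otimes> d \<oplus> (d \<ominus> \<one>) \<oplus> \<ominus> (b \<otimes> c)"
      using h bc by algebra
    also have "\<dots> \<in> I"
      using h bc I(1) by (simp add: ideal.I_r_closed ideal.axioms(1) additive_subgroup.a_closed
          additive_subgroup.a_inv_closed)
    finally have "a \<otimes> d \<ominus> b \<otimes> c \<ominus> \<one> \<in> m" using I(2) by blast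
    then have "a \<otimes> d \<ominus> b \<otimes> c \<in> Units R"
      using h bc by (intro local_ring_Units_if_minus_one_mem[OF loc]) simp_all
    then show "(a, b, c, d) \<in> carrier (GL2 R)" using h bc by (simp add: GL2_carrier_iff)
  qed
  moreover have "group_hom (GL2 R) (GL2 (R Quot I)) (m2map ((+>) I))"
    using GL2_group cring.GL2_group[OF ideal.quotient_is_cring[OF I(1) is_cring]]
      m2map_hom_GL2[OF ring_axioms ideal.quotient_is_ring[OF I(1)] ideal.rcos_ring_hom[OF I(1)]]
    by (simp add: group_hom_def group_hom_axioms_def)
  ultimately show ?thesis
    using group_hom.subgroup_kernel congr_sub_Int_carrier_eq_kernel[OF I(1)]
    by (metis inf.absorb1)
qed

end

lemma congr_sub_mono: "I \<subseteq> K \<Longrightarrow> congr_sub R I \<subseteq> congr_sub R K"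
  unfolding congr_sub_def by blast

context quotient_Zp
begin

lemma image_congr_sub_subset:
  assumes S: "ring S" "f \<in> ring_hom S R"
    and K: "ideal K S" "finite K" "congr_sub S K \<subseteq> carrier (GL2 S)"
    and \<Phi>: "subgroup \<Phi> (GL2 (Zp p))"
  shows "m2map f ` congr_sub S K \<subseteq> {N \<in> carrier (GL2 R). m2map (\<lambda>x. \<phi> (I +> x)) N \<in> \<Phi>}"
proof (rule image_subsetI)
  interpret red: ring_hom_ring R "Zp p" "\<lambda>x. \<phi> (I +> x)" by (rule reduction_ring_hom)
  interpret f: ring_hom_ring S R f using ring_hom_ringI2[OF S(1) ring_axioms S(2)] .
  have fK: "f y \<in> I" if "y \<in> K" for y
  proof (rule add_pow_mem_imp_mem)
    show "f y \<in> carrier R" using that K(1) by (simp add: ideal.Icarr)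
    show "card K > 0" using K(2) that by (auto simp: card_gt_0_iff)
    have "add_pow R (card K) (f y) = f (add_pow S (card K) y)"
      using that K(1) by (simp add: ideal.Icarr f.hom_add_pow)
    also have "\<dots> = \<zero>"
      using ring.finite_ideal_add_pow_card[OF S(1) K(1,2) that] by simp
    finally show "add_pow R (card K) (f y) \<in> I"
      using ideal_I by (simp add: ideal.axioms(1) additive_subgroup.zero_closed)
  qed
  have one_plus: "\<phi> (I +> f (\<one>\<^bsub>S\<^esub> \<oplus>\<^bsub>S\<^esub> x)) = \<one>\<^bsub>Zp p\<^esub>" if "x \<in> K" for x
    using fK[OF that] reduction_eq_zero_iff[of "f x"] ideal.Icarr[OF ideal_I] ideal.Icarr[OF K(1) that]
    by simp
  fix N assume N: "N \<in> congr_sub S K"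
  then obtain a b c d where "N = (\<one>\<^bsub>S\<^esub> \<oplus>\<^bsub>S\<^esub> a, b, c, \<one>\<^bsub>S\<^esub> \<oplus>\<^bsub>S\<^esub> d)"
    "a \<in> K" "b \<in> K" "c \<in> K" "d \<in> K"
    by (auto simp: congr_sub_def)
  then have "m2map (\<lambda>x. \<phi> (I +> x)) (m2map f N) = \<one>\<^bsub>GL2 (Zp p)\<^esub>"
    using one_plus fK reduction_eq_zero_iff ideal.Icarr[OF ideal_I] by simp
  moreover have "m2map f N \<in> carrier (GL2 R)"
    using hom_in_carrier[OF m2map_hom_GL2[OF S(1) ring_axioms S(2)]] N K(3) by blast
  ultimately show "m2map f N \<in> {N \<in> carrier (GL2 R). m2map (\<lambda>x. \<phi> (I +> x)) N \<in> \<Phi>}"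
    using subgroup.one_closed[OF \<Phi>] by simp
qed

end

section \<open>Lifts of congruence subgroups\<close>

text \<open>
  Here \<open>(a, b)\<close> is the first row of \<open>g\<close>, \<open>(c, e)\<close> the first column of \<open>k\<close>, and primes mark
  the entries of their lifts: modulo \<open>M\<close>, the \<open>(1,1)\<close> entry of \<open>g k - \<pi>(g) \<pi>(k)\<close> is
  that of \<open>g - \<pi>(g)\<close> plus that of \<open>k - \<pi>(k)\<close>.
\<close>
lemma (in cring) fst_m2mult_congruence:
  assumes I: "ideal I R" and M: "ideal M R"
    and J: "J \<subseteq> I" "\<And>u y. u \<in> I \<Longrightarrow> y \<in> J \<Longrightarrow> u \<otimes> y \<in> M"
    and carr: "a \<in> carrier R" "b \<in> carrier R" "c \<in> carrier R" "e \<in> carrier R"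
      "a' \<in> carrier R" "b' \<in> carrier R" "c' \<in> carrier R" "e' \<in> carrier R"
    and in_I: "a \<ominus> \<one> \<in> I" "b \<in> I" "c \<ominus> \<one> \<in> I" "e \<in> I"
    and in_J: "a \<ominus> a' \<in> J" "b \<ominus> b' \<in> J" "c \<ominus> c' \<in> J" "e \<ominus> e' \<in> J"
  shows "(a \<otimes> c \<oplus> b \<otimes> e) \<ominus> (a' \<otimes> c' \<oplus> b' \<otimes> e') \<ominus> ((a \<ominus> a') \<oplus> (c \<ominus> c')) \<in> M"
proof -
  have sub: "x \<ominus> y \<in> K" if "ideal K R" "x \<in> K" "y \<in> K" for K x y
    using that by (simp add: a_minus_def ideal.axioms(1) additive_subgroup.a_closed additive_subgroup.a_inv_closed)
  have add: "x \<oplus> y \<in> M" if "x \<in> M" "y \<in> M" for x y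
    using that M by (simp add: ideal.axioms(1) additive_subgroup.a_closed)
  have "(a \<ominus> \<one>) \<ominus> (a \<ominus> a') = a' \<ominus> \<one>" "b \<ominus> (b \<ominus> b') = b'" using carr by algebra+
  then have a'b': "a' \<ominus> \<one> \<in> I" "b' \<in> I"
    using sub[OF I in_I(1) subsetD[OF J(1) in_J(1)]] sub[OF I in_I(2) subsetD[OF J(1) in_J(2)]]
    by simp_all
  have "(a \<otimes> c \<oplus> b \<otimes> e) \<ominus> (a' \<otimes> c' \<oplus> b' \<otimes> e') \<ominus> ((a \<ominus> a') \<oplus> (c \<ominus> c'))
      = (c \<ominus> \<one>) \<otimes> (a \<ominus> a') \<oplus> e \<otimes> (b \<ominus> b') \<oplus> (a' \<ominus> \<one>) \<otimes> (c \<ominus> c') \<oplus> b' \<otimes> (e \<ominus> e')"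
    using carr by algebra
  also have "\<dots> \<in> M" using add J(2) in_I in_J a'b' by simp
  finally show ?thesis .
qed

locale congr_sub_lift = cring R for R (structure) +
  fixes R' :: "('c, 'd) ring_scheme" and f :: "'a \<Rightarrow> 'c"
    and G :: "'c mat2 set" and h :: "'c mat2 \<Rightarrow> 'a mat2"
    and I :: "'a set" and H :: "'a mat2 set" and M :: "'a set"
  assumes ring_hom_f: "ring_hom_ring R R' f"
    and hom_h: "h \<in> hom ((GL2 R')\<lparr>carrier := G\<rparr>) (GL2 R)"
    and h_lifts: "\<And>g. g \<in> G \<Longrightarrow> m2map f (h g) = g"
    and ideal_I: "ideal I R" and kernel_subset: "a_kernel R R' f \<subseteq> I"
    and subgroup_H: "subgroup H (GL2 R)" and H_subset: "H \<subseteq> congr_sub R I"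
    and image_subset: "m2map f ` H \<subseteq> G"
    and ideal_M: "ideal M R" and absorbs: "\<And>u y. u \<in> I \<Longrightarrow> y \<in> a_kernel R R' f \<Longrightarrow> u \<otimes> y \<in> M"
begin

interpretation f: ring_hom_ring R R' f by (rule ring_hom_f)

definition lift :: "'a mat2 \<Rightarrow> 'a mat2" where
  "lift = h \<circ> m2map f"

definition lift_defect :: "'a mat2 \<Rightarrow> 'a set" where
  "lift_defect g = M +> (fst g \<ominus> fst (lift g))"

lemma lift_hom: "lift \<in> hom ((GL2 R)\<lparr>carrier := H\<rparr>) (GL2 R)"
  unfolding lift_def
  using hom_comp_restrict[OF m2map_hom_GL2[OF ring_axioms f.S.ring_axioms f.homh] hom_h
      subgroup.subset[OF subgroup_H] image_subset] .

lemma lift_entries: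
  assumes "g \<in> H" "g = (a, b, c, d)" "lift g = (a', b', c', d')"
  shows "a \<in> carrier R" "b \<in> carrier R" "c \<in> carrier R" "d \<in> carrier R"
    "a' \<in> carrier R" "b' \<in> carrier R" "c' \<in> carrier R" "d' \<in> carrier R"
    "a \<ominus> \<one> \<in> I" "b \<in> I" "c \<in> I" "d \<ominus> \<one> \<in> I"
    "a \<ominus> a' \<in> a_kernel R R' f" "b \<ominus> b' \<in> a_kernel R R' f"
    "c \<ominus> c' \<in> a_kernel R R' f" "d \<ominus> d' \<in> a_kernel R R' f"
proof -
  have "g \<in> carrier (GL2 R)" "lift g \<in> carrier (GL2 R)"
    using assms(1) subgroup.subset[OF subgroup_H] hom_in_carrier[OF lift_hom] by auto
  then show carr: "a \<in> carrier R" "b \<in> carrier R" "c \<in> carrier R" "d \<in> carrier R"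
    "a' \<in> carrier R" "b' \<in> carrier R" "c' \<in> carrier R" "d' \<in> carrier R"
    using assms(2,3) by (simp_all add: GL2_carrier_iff)
  show "a \<ominus> \<one> \<in> I" "b \<in> I" "c \<in> I" "d \<ominus> \<one> \<in> I"
    using H_subset assms(1,2) by (auto simp: congr_sub_iff[OF ideal_I])
  have "m2map f g \<in> G" using image_subset assms(1) by blast
  then have "m2map f (lift g) = m2map f g" by (simp add: lift_def h_lifts)
  then have "f a = f a'" "f b = f b'" "f c = f c'" "f d = f d'" using assms(2,3) by simp_all
  then show "a \<ominus> a' \<in> a_kernel R R' f" "b \<ominus> b' \<in> a_kernel R R' f"
    "c \<ominus> c' \<in> a_kernel R R' f" "d \<ominus> d' \<in> a_kernel R R' f"
    using carr by (simp_all add: f.minus_mem_a_kernel)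
qed

lemma lift_defect_hom: "lift_defect \<in> hom ((GL2 R)\<lparr>carrier := H\<rparr>) (add_monoid (R Quot M))"
proof (rule homI)
  fix g assume "g \<in> carrier ((GL2 R)\<lparr>carrier := H\<rparr>)"
  then show "lift_defect g \<in> carrier (add_monoid (R Quot M))"
    using lift_entries[of g] ring_hom_closed[OF ideal.rcos_ring_hom[OF ideal_M]]
    by (cases g, cases "lift g") (simp add: lift_defect_def)
next
  fix g k assume "g \<in> carrier ((GL2 R)\<lparr>carrier := H\<rparr>)" "k \<in> carrier ((GL2 R)\<lparr>carrier := H\<rparr>)"
  then have gh: "g \<in> H" "k \<in> H" by simp_all
  obtain a b c d a' b' c' d' where g: "g = (a, b, c, d)" "lift g = (a', b', c', d')"
    by (cases g, cases "lift g") auto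
  obtain x y z w x' y' z' w' where k: "k = (x, y, z, w)" "lift k = (x', y', z', w')"
    by (cases k, cases "lift k") auto
  note eg = lift_entries[OF gh(1) g] and eh = lift_entries[OF gh(2) k]
  have "lift (g \<otimes>\<^bsub>GL2 R\<^esub> k) = lift g \<otimes>\<^bsub>GL2 R\<^esub> lift k"
    using hom_mult[OF lift_hom] gh by simp
  then have fst_gh: "fst (g \<otimes>\<^bsub>GL2 R\<^esub> k) \<ominus> fst (lift (g \<otimes>\<^bsub>GL2 R\<^esub> k))
      = (a \<otimes> x \<oplus> b \<otimes> z) \<ominus> (a' \<otimes> x' \<oplus> b' \<otimes> z')"
    using g k by simp
  have "(a \<otimes> x \<oplus> b \<otimes> z) \<ominus> (a' \<otimes> x' \<oplus> b' \<otimes> z') \<ominus> ((a \<ominus> a') \<oplus> (x \<ominus> x')) \<in> M"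
    by (rule fst_m2mult_congruence[OF ideal_I ideal_M kernel_subset absorbs])
      (use eg eh in simp_all)
  then have "M +> ((a \<otimes> x \<oplus> b \<otimes> z) \<ominus> (a' \<otimes> x' \<oplus> b' \<otimes> z')) = M +> ((a \<ominus> a') \<oplus> (x \<ominus> x'))"
    using quotient_eq_iff_same_a_r_cos[OF ideal_M] eg eh by simp
  also have "\<dots> = (M +> (a \<ominus> a')) \<oplus>\<^bsub>R Quot M\<^esub> (M +> (x \<ominus> x'))"
    using ring_hom_add[OF ideal.rcos_ring_hom[OF ideal_M]] eg eh by simp
  finally show "lift_defect (g \<otimes>\<^bsub>(GL2 R)\<lparr>carrier := H\<rparr>\<^esub> k)
      = lift_defect g \<otimes>\<^bsub>add_monoid (R Quot M)\<^esub> lift_defect k"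
    using fst_gh g k by (simp add: lift_defect_def)
qed

lemma lift_defect_pow_char:
  fixes p :: nat
  assumes p: "add_pow R p \<one> \<in> I" and k: "k \<in> H"
  shows "lift_defect k [^]\<^bsub>add_monoid (R Quot M)\<^esub> p = \<one>\<^bsub>add_monoid (R Quot M)\<^esub>"
proof -
  obtain a b c d a' b' c' d' where k_eq: "k = (a, b, c, d)" "lift k = (a', b', c', d')"
    by (cases k, cases "lift k") auto
  note e = lift_entries[OF k k_eq]
  have "add_pow R p (a \<ominus> a') = add_pow R p \<one> \<otimes> (a \<ominus> a')"
    using e by (simp add: add_pow_ldistr)
  also have "\<dots> \<in> M" using absorbs[OF p e(13)] .
  finally have "M +> add_pow R p (a \<ominus> a') = \<zero>\<^bsub>R Quot M\<^esub>"
    using a_rcos_zero[OF ideal_M] by (simp add: FactRing_def)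
  then show ?thesis
    using ring_hom_ring.hom_add_pow[OF ideal.rcos_ring_hom_ring[OF ideal_M], of "a \<ominus> a'" p] e k_eq
    by (simp add: lift_defect_def add_pow_def)
qed

lemma lift_defect_vanishes:
  assumes p: "add_pow R p \<one> \<in> I" and g: "g \<in> comm_pow_sub (GL2 R) H p"
  shows "fst g \<ominus> fst (lift g) \<in> M"
proof -
  interpret Q: cring "R Quot M" using ideal.quotient_is_cring[OF ideal_M is_cring] .
  have "g \<in> kernel ((GL2 R)\<lparr>carrier := H\<rparr>) (add_monoid (R Quot M)) lift_defect"
    using group.comm_pow_sub_subset_kernel[OF GL2_group subgroup_H Q.a_comm_group lift_defect_hom]
      lift_defect_pow_char[OF p] g by blast
  then have gH: "g \<in> H" and "M +> (fst g \<ominus> fst (lift g)) = M"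
    by (simp_all add: kernel_def lift_defect_def FactRing_def)
  moreover obtain a b c d a' b' c' d' where "g = (a, b, c, d)" "lift g = (a', b', c', d')"
    by (cases g, cases "lift g") auto
  moreover note lift_entries[OF gH this]
  ultimately show ?thesis using ideal.rcos_const_imp_mem[OF ideal_M, of "a \<ominus> a'"] by simp
qed

lemma a_kernel_subset_if_congr_sub_comm_pow:
  assumes p: "add_pow R p \<one> \<in> I"
    and hyp: "congr_sub R (a_kernel R R' f) \<subseteq> comm_pow_sub (GL2 R) H p"
  shows "a_kernel R R' f \<subseteq> M"
proof
  fix j assume j: "j \<in> a_kernel R R' f"
  have jc: "j \<in> carrier R" and fj: "f j = \<zero>\<^bsub>R'\<^esub>" using j unfolding a_kernel_def' by simp_all
  let ?g = "(\<one> \<oplus> j, \<zero>, \<zero>, \<one>)"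
  have one_j: "(\<one> \<oplus> j) \<ominus> \<one> = j" and one_one: "\<one> \<ominus> \<one> = \<zero>" using jc by algebra+
  have "?g \<in> congr_sub R (a_kernel R R' f)"
    using j jc f.kernel_is_ideal
    by (simp add: congr_sub_iff one_j one_one ideal.axioms(1) additive_subgroup.zero_closed)
  then have g: "?g \<in> comm_pow_sub (GL2 R) H p" using hyp by blast
  interpret L: group_hom "(GL2 R)\<lparr>carrier := H\<rparr>" "GL2 R" lift
    using lift_hom subgroup.subgroup_is_group[OF subgroup_H GL2_group] GL2_group
    by (simp add: group_hom_def group_hom_axioms_def)
  have "m2map f ?g = m2map f \<one>\<^bsub>GL2 R\<^esub>" using jc fj by simp
  then have "lift ?g = \<one>\<^bsub>GL2 R\<^esub>" using L.hom_one by (simp add: lift_def)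
  then have "fst ?g \<ominus> fst (lift ?g) = j" using one_j by simp
  then show "j \<in> M" using lift_defect_vanishes[OF p g] by simp
qed

end

theorem mainTheorem12:
  fixes S :: "('a, 'c) ring_scheme" and R :: "('b, 'd) ring_scheme"
    and IS :: "'a set" and IR :: "'b set"
    and p :: nat
    and phiS :: "'a set \<Rightarrow> (nat \<Rightarrow> int)" and phiR :: "'b set \<Rightarrow> (nat \<Rightarrow> int)"
    and f :: "'a \<Rightarrow> 'b"
    and Phi :: "(nat \<Rightarrow> int) mat2 set"
  assumes "Factorial_Ring.prime p"
    and "local_ring S" and "local_ring R"
    and "ideal IS S" and "finite IS"
    and "ideal IR R" and "finite IR"
    and "phiS \<in> ring_iso (S Quot IS) (Zp p)"
    and "phiR \<in> ring_iso (R Quot IR) (Zp p)"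
    and "f \<in> ring_hom S R" and "f ` carrier S = carrier R"
    and "finite (a_kernel S R f)" and "a_kernel S R f \<noteq> {\<zero>\<^bsub>S\<^esub>}"
    and "subgroup Phi (GL2 (Zp p))" and "finite Phi" and "coprime (card Phi) p"
    and "congr_sub S (a_kernel S R f) \<subseteq> comm_pow_sub (GL2 S) (congr_sub S IS) p"
  shows "\<not> (\<exists>h. let Gt = {M \<in> carrier (GL2 R). m2map (\<lambda>x. phiR (IR +>\<^bsub>R\<^esub> x)) M \<in> Phi} in
                h \<in> hom ((GL2 R)\<lparr>carrier := Gt\<rparr>) (GL2 S)
                \<and> (\<forall>M \<in> Gt. m2map f (h M) = M))"
proof
  let ?Gt = "{M \<in> carrier (GL2 R). m2map (\<lambda>x. phiR (IR +>\<^bsub>R\<^esub> x)) M \<in> Phi}"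
  assume "\<exists>h. let Gt = ?Gt in h \<in> hom ((GL2 R)\<lparr>carrier := Gt\<rparr>) (GL2 S) \<and> (\<forall>M \<in> Gt. m2map f (h M) = M)"
  then obtain h where h: "h \<in> hom ((GL2 R)\<lparr>carrier := ?Gt\<rparr>) (GL2 S)" "\<And>M. M \<in> ?Gt \<Longrightarrow> m2map f (h M) = M"
    by (auto simp: Let_def)
  interpret S: cring S using assms(2) by (simp add: local_ring_def)
  interpret R: cring R using assms(3) by (simp add: local_ring_def)
  interpret f: ring_hom_ring S R f using ring_hom_ringI2[OF S.ring_axioms R.ring_axioms assms(10)] .
  interpret qS: quotient_Zp S IS phiS p
    by (intro quotient_Zp.intro quotient_Zp_axioms.intro S.ring_axioms assms(4,8,1))
  interpret qR: quotient_Zp R IR phiR p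
    by (intro quotient_Zp.intro quotient_Zp_axioms.intro R.ring_axioms assms(6,9,1))
  obtain m where m: "maximalideal m S" using assms(2) by (auto simp: local_ring_def)
  have "\<one>\<^bsub>R\<^esub> \<noteq> \<zero>\<^bsub>R\<^esub>"
    using qR.one_notin_ideal assms(6) by (auto simp: ideal.axioms(1) additive_subgroup.zero_closed)
  then have "\<one>\<^bsub>S\<^esub> \<notin> a_kernel S R f" unfolding a_kernel_def' by simp
  then have J_m: "a_kernel S R f \<subseteq> m" by (rule S.local_ring_ideal_subset[OF assms(2) m f.kernel_is_ideal])
  then obtain M where M: "ideal M S" "M \<subseteq> a_kernel S R f" "M \<noteq> a_kernel S R f"
      "\<And>u y. u \<in> m \<Longrightarrow> y \<in> a_kernel S R f \<Longrightarrow> u \<otimes>\<^bsub>S\<^esub> y \<in> M"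
    using S.local_ring_exists_absorbing_subideal[OF assms(2) m f.kernel_is_ideal assms(12,13)] by blast
  have IS_m: "IS \<subseteq> m" using S.local_ring_ideal_subset[OF assms(2) m assms(4) qS.one_notin_ideal] .
  have \<Gamma>: "subgroup (congr_sub S IS) (GL2 S)" using S.congr_sub_subgroup[OF assms(2) m assms(4) IS_m] .
  have image: "m2map f ` congr_sub S IS \<subseteq> ?Gt"
    using qR.image_congr_sub_subset[OF S.ring_axioms assms(10,4,5) subgroup.subset[OF \<Gamma>] assms(14)] .
  interpret L: congr_sub_lift S R f ?Gt h m "congr_sub S IS" M
    by (intro congr_sub_lift.intro congr_sub_lift_axioms.intro)
      (fact S.is_cring f.is_ring_hom_ring h maximalideal.axioms(1)[OF m] J_m \<Gamma> congr_sub_mono[OF IS_m] image M(1,4))+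
  have "add_pow S p \<one>\<^bsub>S\<^esub> \<in> m"
    using S.local_ring_Units[OF assms(2) m] qS.add_pow_char_notin_Units by blast
  then have "a_kernel S R f \<subseteq> M" using L.a_kernel_subset_if_congr_sub_comm_pow assms(17) by blast
  then show False using M(2,3) by blast
qed

end
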